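(* Let $p\ge 3$ be a prime and let $(a_n)_{n\ge0}$ be a sequence of elements of $\mathbf{Q}_p$ satisfying $a_n=ra_{n-1}+sa_{n-2}$ ($n\ge2$) for some $r,s\in\mathbf{Q}_p$, given by $a_n=c_1\lambda_1^n+c_2\lambda_2^n$ for nonzero $c_1,c_2,\lambda_1,\lambda_2$ which all lie in $\mathbf{Q}_p$ or all lie in some unramified quadratic extension $\mathbf{Q}_p(\sqrt d)$ of $\mathbf{Q}_p$. Suppose $|\lambda_1|_p=|\lambda_2|_p>0$ and $\lambda_2/\lambda_1$ is not a root of unity. Let $l$ be the order of $\lambda_2/\lambda_1$ modulo $p$ and $k=\nu_p\big((\lambda_2/\lambda_1)^l-1\big)$. Let $K$ be the Kepler set of $(a_n)$ and let $\Lambda$ be the closure of $\{(\lambda_2/\lambda_1)^n: n\in\mathbf{N}\}$. <ol> <li>If $-c_1/c_2\notin\Lambda$, then $$K=\bigsqcup_{i=0}^{l-1}\left(\frac{a_{i+1}}{a_i}+p^{\nu_p(c_1/c_2)+\nu_p(\lambda_2-\lambda_1)-2\nu_p\left(c_1/c_2+(\lambda_2/\lambda_1)^i\right)+k}\mathbf{Z}_p\right).$$</li> <li>If $-c_1/c_2\in\Lambda$ and $l=1$, then $K=\mathbf{Q}_p\setminus\left(\frac{\lambda_1+\lambda_2}{2}+p^{1+\nu_p(\lambda_2)}\mathbf{Z}_p\right)$.</li> <li>If $-c_1/c_2\in\Lambda$, $l\ge2$, and $s\in\{0,1,\dots,l-1\}$ is defined by $(\lambda_2/\lambda_1)^s\equiv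 -c_1/c_2 \pmod{p^k}$, then $$K=\bigsqcup_{i=0,\,i\ne s}^{l-1}\left(\frac{a_{i+1}}{a_i}+p^{\nu_p(\lambda_2-\lambda_1)+k}\mathbf{Z}_p\right)\ \bigsqcup\ \left(\mathbf{Q}_p\setminus p^{\nu_p(\lambda_2)+1-k}\mathbf{Z}_p\right).$$</li> </ol>
   Context: The Kepler set of a sequence $(a_n)_{n\ge0}$ in $\mathbf{Q}_p$ is the closure in $\mathbf{Q}_p$ of $\{a_{n+1}/a_n : n\ge0,\ a_n\ne0\}$. $\nu_p$ denotes the $p$-adic valuation on $\mathbf{Q}_p$ and its unique extension to $\mathbf{Q}_p(\sqrt d)$ with $\nu_p(p)=1$; $|x|_p=p^{-\nu_p(x)}$. The unramified quadratic extension is $\mathbf{Q}_p(\sqrt d)$ with $d\in\mathbf{Z}_p^*$ a non-square; its ring of integers is $\mathbf{Z}_p[\sqrt d]$. For $x,y$ in the ring of integers and $m\ge1$, $x\equiv y\pmod{p^m}$ means $x-y\in p^m$ times the ring of integers. For a unit $u$ of the ring of integers, the order of $u$ modulo $p$ is the least $l\ge1$ with $u^l\equiv1\pmod p$. The closure $\Lambda$ is taken in the field containing $\lambda_1,\lambda_2$; $\bigsqcup$ denotes disjoint union. *)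

theory Defs
  imports "HOL-Computational_Algebra.Computational_Algebra"
begin

text \<open>
  We work in an arbitrary field E
  (a type 'a of characteristic 0) equipped with an integer valuation v, and impose
  conditions that characterise E up to isomorphism as either Q_p or an unramified
  quadratic extension Q_p(sqrt d), with v = nu_p.  The value v 0 is irrelevant; all
  uses of v are guarded by nonzeroness via close.
\<close>

definition close :: "('a::field \<Rightarrow> int) \<Rightarrow> int \<Rightarrow> 'a \<Rightarrow> bool" where
  "close v m x \<longleftrightarrow> x = 0 \<or> m \<le> v x"

definition vclosure :: "('a::field \<Rightarrow> int) \<Rightarrow> 'a set \<Rightarrow> 'a set" where
  "vclosure v S = {x. \<forall>m::int. \<exists>y\<in>S. close v m (x - y)}"

definition v_cauchy :: "('a::field \<Rightarrow> int) \<Rightarrow> (nat \<Rightarrow> 'a) \<Rightarrow> bool" where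
  "v_cauchy v X \<longleftrightarrow> (\<forall>m::int. \<exists>N. \<forall>i\<ge>N. \<forall>j\<ge>N. close v m (X i - X j))"

definition v_converges :: "('a::field \<Rightarrow> int) \<Rightarrow> (nat \<Rightarrow> 'a) \<Rightarrow> 'a \<Rightarrow> bool" where
  "v_converges v X L \<longleftrightarrow> (\<forall>m::int. \<exists>N. \<forall>n\<ge>N. close v m (X n - L))"

definition Qp :: "('a::field_char_0 \<Rightarrow> int) \<Rightarrow> 'a set" where
  "Qp v = vclosure v (range of_rat)"

definition padic_valuation :: "nat \<Rightarrow> ('a::field_char_0 \<Rightarrow> int) \<Rightarrow> bool" where
  "padic_valuation p v \<longleftrightarrow>
     (\<forall>x y. x \<noteq> 0 \<longrightarrow> y \<noteq> 0 \<longrightarrow> v (x * y) = v x + v y) \<and>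
     (\<forall>x y. x \<noteq> 0 \<longrightarrow> y \<noteq> 0 \<longrightarrow> x + y \<noteq> 0 \<longrightarrow> min (v x) (v y) \<le> v (x + y)) \<and>
     (\<forall>n::int. n \<noteq> 0 \<longrightarrow> v (of_int n) = int (multiplicity (int p) n)) \<and>
     (\<forall>X. v_cauchy v X \<longrightarrow> (\<exists>L. v_converges v X L))"

text \<open>E is Q_p itself, or E = Q_p(delta) with delta^2 = d a p-adic unit which is not a
  square in Q_p (the unramified quadratic extension, p odd)\<close>
definition Qp_or_unramified_quadratic :: "nat \<Rightarrow> ('a::field_char_0 \<Rightarrow> int) \<Rightarrow> bool" where
  "Qp_or_unramified_quadratic p v \<longleftrightarrow>
     padic_valuation p v \<and>
     (Qp v = UNIV \<or>
      (\<exists>\<delta>. \<delta>\<^sup>2 \<in> Qp v \<and> \<delta>\<^sup>2 \<noteq> 0 \<and> v (\<delta>\<^sup>2) = 0 \<and> (\<forall>x\<in>Qp v. x\<^sup>2 \<noteq> \<delta>\<^sup>2) \<and>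
           (\<forall>z. \<exists>a\<in>Qp v. \<exists>b\<in>Qp v. z = a + b * \<delta>)))"

definition pZp :: "('a::field_char_0 \<Rightarrow> int) \<Rightarrow> int \<Rightarrow> 'a set" where
  "pZp v m = {y \<in> Qp v. close v m y}"

definition coset :: "('a::field_char_0 \<Rightarrow> int) \<Rightarrow> 'a \<Rightarrow> int \<Rightarrow> 'a set" where
  "coset v c m = (\<lambda>y. c + y) ` pZp v m"

definition kepler_set :: "('a::field_char_0 \<Rightarrow> int) \<Rightarrow> (nat \<Rightarrow> 'a) \<Rightarrow> 'a set" where
  "kepler_set v a = Qp v \<inter> vclosure v {a (Suc n) / a n | n. a n \<noteq> 0}"

definition cong_pm :: "('a::field_char_0 \<Rightarrow> int) \<Rightarrow> int \<Rightarrow> 'a \<Rightarrow> 'a \<Rightarrow> bool" where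
  "cong_pm v m x y \<longleftrightarrow> close v m (x - y)"

definition ord_mod_p :: "('a::field_char_0 \<Rightarrow> int) \<Rightarrow> 'a \<Rightarrow> nat" where
  "ord_mod_p v u = (LEAST l. 1 \<le> l \<and> cong_pm v 1 (u ^ l) 1)"

end

theory Submission
  imports Defs
begin

text \<open>
  Put x = c1 / c2, u = lam2 / lam1 and y n = x + u^n.  Then a n = c2 lam1^n y n, so the ratio
  a (n + 1) / a n = lam2 + C / y n with C = x (lam1 - lam2) is a Moebius function of y n.  The
  unit u has order l modulo p, and w = u^l satisfies v (w - 1) = k \<ge> 1, hence
  v (w^(p^j) - 1) = k + j.  On a residue class n = i + l N we have y n = x + u^i w^N, and a
  Moebius function of x + u^i w^N has increments whose valuations grow by exactly one when N
  moves by p^j; choosing base-p digits shows that its values are dense in a ball of Q_p.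

  If y i is not divisible by p^k, the class of i fills the ball around a (i + 1) / a i of
  radius p^(v C + k - 2 v (y i)), and these balls are disjoint.  Otherwise (which happens iff
  -x lies in the closure of the powers of u) the class of i is a pole: there
  1 / (a (n + 1) / a n - (lam1 + lam2) / 2) fills a ball around 0, so the ratios fill the
  complement of a ball.
\<close>

section \<open>Valuations\<close>

lemma int_residue:
  assumes "prime p" and "\<not> int p dvd b"
  shows "\<exists>t. 0 \<le> t \<and> t < int p \<and> int p dvd a - t * b"
proof -
  have "coprime (int p) b"
    using assms by (intro prime_imp_coprime) simp_all
  then obtain c d where cd: "c * b + d * int p = 1"
    by (metis bezout_int coprime_commute coprime_iff_gcd_eq_1)
  define t where "t = (a * c) mod int p"
  have "a - t * b = a * (c * b + d * int p) - t * b"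
    using cd by simp
  also have "\<dots> = int p * ((a * c div int p) * b + a * d)"
    by (simp add: t_def minus_mod_eq_mult_div[symmetric] algebra_simps)
  finally have "int p dvd a - t * b" ..
  moreover have "0 \<le> t" and "t < int p"
    using prime_gt_1_nat[OF assms(1)] by (auto simp: t_def)
  ultimately show ?thesis
    by blast
qed

locale padic_field =
  fixes p :: nat and v :: "'a::field_char_0 \<Rightarrow> int"
  assumes padic_valuation: "padic_valuation p v"
    and prime_p: "prime p" and p_ge_3: "p \<ge> 3"
begin

lemma v_mult: "x \<noteq> 0 \<Longrightarrow> y \<noteq> 0 \<Longrightarrow> v (x * y) = v x + v y"
  using padic_valuation unfolding padic_valuation_def by blast

lemma v_add_ge_min: "x \<noteq> 0 \<Longrightarrow> y \<noteq> 0 \<Longrightarrow> x + y \<noteq> 0 \<Longrightarrow> min (v x) (v y) \<le> v (x + y)"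
  using padic_valuation unfolding padic_valuation_def by blast

lemma v_of_int: "n \<noteq> 0 \<Longrightarrow> v (of_int n) = int (multiplicity (int p) n)"
  using padic_valuation unfolding padic_valuation_def by blast

lemma v_one [simp]: "v 1 = 0"
  using v_mult[of 1 1] by simp

lemma v_minus [simp]: "v (- x) = v x"
proof (cases "x = 0")
  case False
  have "v (-1) = 0"
    using v_mult[of "-1" "-1"] by simp
  with False show ?thesis
    using v_mult[of "-1" x] by simp
qed simp

lemma v_minus_commute: "v (x - y) = v (y - x)"
  using v_minus[of "y - x"] by simp

lemma v_inverse: "x \<noteq> 0 \<Longrightarrow> v (inverse x) = - v x"
  using v_mult[of x "inverse x"] by simp

lemma v_divide: "x \<noteq> 0 \<Longrightarrow> y \<noteq> 0 \<Longrightarrow> v (x / y) = v x - v y"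
  by (simp add: divide_inverse v_mult v_inverse)

lemma v_power: "x \<noteq> 0 \<Longrightarrow> v (x ^ n) = int n * v x"
  by (induction n) (auto simp: v_mult algebra_simps)

lemma v_p: "v (of_nat p) = 1"
proof -
  have "multiplicity (int p) (int p) = 1"
    using prime_p by (intro multiplicity_self) (auto simp: prime_int_iff prime_nat_iff)
  then show ?thesis
    using v_of_int[of "int p"] prime_p by (simp add: prime_gt_0_nat)
qed

lemma v_of_nat_nonneg: "n \<noteq> 0 \<Longrightarrow> v (of_nat n) \<ge> 0"
  using v_of_int[of "int n"] by simp

lemma v_of_int_ge_1:
  assumes "n \<noteq> 0" and "int p dvd n"
  shows "v (of_int n) \<ge> 1"
proof -
  have "multiplicity (int p) n \<ge> 1"
    using assms prime_p by (intro multiplicity_geI) (auto simp: prime_gt_1_nat)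
  then show ?thesis
    using v_of_int[OF assms(1)] by simp
qed

lemma v_of_int_eq_0: "\<not> int p dvd n \<Longrightarrow> v (of_int n) = 0"
  using v_of_int[of n] not_dvd_imp_multiplicity_0[of "int p" n] by (cases "n = 0") auto

lemma v_two: "v 2 = 0"
proof -
  have "\<not> int p dvd 2"
    using p_ge_3 by (auto dest!: zdvd_imp_le)
  from v_of_int_eq_0[OF this] show ?thesis by simp
qed

lemma close_0 [simp]: "close v m 0"
  by (simp add: close_def)

lemma close_v: "close v (v x) x"
  by (simp add: close_def)

lemma close_mono: "close v m x \<Longrightarrow> m' \<le> m \<Longrightarrow> close v m' x"
  by (auto simp: close_def)

lemma close_minus_iff [simp]: "close v m (- x) \<longleftrightarrow> close v m x"
  by (auto simp: close_def)

lemma close_minus_commute: "close v m (x - y) \<longleftrightarrow> close v m (y - x)"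
  using close_minus_iff[of m "y - x"] by simp

lemma close_add: "close v m x \<Longrightarrow> close v m y \<Longrightarrow> close v m (x + y)"
  unfolding close_def using v_add_ge_min[of x y] by fastforce

lemma close_diff: "close v m x \<Longrightarrow> close v m y \<Longrightarrow> close v m (x - y)"
  using close_add[of m x "- y"] by simp

lemma close_mult: "close v a x \<Longrightarrow> close v b y \<Longrightarrow> close v (a + b) (x * y)"
  unfolding close_def using v_mult[of x y] by (cases "x = 0 \<or> y = 0") auto

lemma close_divide: "close v a x \<Longrightarrow> y \<noteq> 0 \<Longrightarrow> close v (a - v y) (x / y)"
  unfolding close_def by (cases "x = 0") (auto simp: v_divide)

lemma close_mult_iff: "y \<noteq> 0 \<Longrightarrow> close v a (y * x) \<longleftrightarrow> close v (a - v y) x"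
  unfolding close_def by (cases "x = 0") (auto simp: v_mult)

lemma close_divide_iff: "y \<noteq> 0 \<Longrightarrow> close v a (x / y) \<longleftrightarrow> close v (a + v y) x"
  unfolding close_def by (cases "x = 0") (auto simp: v_divide)

lemma close_of_nat: "close v 0 (of_nat n)"
  using v_of_nat_nonneg[of n] by (cases "n = 0") (auto simp: close_def)

lemma close_sum: "(\<And>i. i \<in> A \<Longrightarrow> close v m (f i)) \<Longrightarrow> close v m (sum f A)"
  by (induction A rule: infinite_finite_induct) (auto intro: close_add)

lemma close_power: "close v 0 x \<Longrightarrow> close v 0 (x ^ n)"
proof (induction n)
  case (Suc n)
  then show ?case
    using close_mult[of 0 x 0 "x ^ n"] by simp
qed (simp add: close_def)

lemma v_add_dominant:
  assumes "y \<noteq> 0" and "close v (v y + 1) x"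
  shows "y + x \<noteq> 0" and "v (y + x) = v y"
proof -
  show ne: "y + x \<noteq> 0"
    using assms by (auto simp: close_def add_eq_0_iff2)
  show "v (y + x) = v y"
  proof (cases "x = 0")
    case False
    then have "v y < v x"
      using assms(2) by (simp add: close_def)
    moreover have "min (v (y + x)) (v (- x)) \<le> v (y + x + - x)"
      using False assms(1) ne by (intro v_add_ge_min) auto
    ultimately show ?thesis
      using v_add_ge_min[OF assms(1) False ne] by simp
  qed simp
qed

lemma unit_if_close_one: "close v 1 (w - 1) \<Longrightarrow> w \<noteq> 0 \<and> v w = 0"
  using v_add_dominant[of 1 "w - 1"] by simp

section \<open>Q_p as a subfield\<close>

lemma Qp_iff: "x \<in> Qp v \<longleftrightarrow> (\<forall>m. \<exists>q. close v m (x - of_rat q))"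
  unfolding Qp_def vclosure_def by auto

lemma of_rat_in_Qp [simp]: "of_rat q \<in> Qp v"
  unfolding Qp_iff by (auto intro: exI[of _ q])

lemma zero_in_Qp [simp]: "0 \<in> Qp v"
  using of_rat_in_Qp[of 0] by simp

lemma one_in_Qp [simp]: "1 \<in> Qp v"
  using of_rat_in_Qp[of 1] by simp

lemma numeral_in_Qp [simp]: "numeral n \<in> Qp v"
  using of_rat_in_Qp[of "numeral n"] by simp

lemma Qp_add: "x \<in> Qp v \<Longrightarrow> y \<in> Qp v \<Longrightarrow> x + y \<in> Qp v"
  unfolding Qp_iff
proof (intro allI)
  fix m
  assume "\<forall>m. \<exists>q. close v m (x - of_rat q)" and "\<forall>m. \<exists>q. close v m (y - of_rat q)"
  then obtain q1 q2 where "close v m (x - of_rat q1)" and "close v m (y - of_rat q2)"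
    by blast
  then have "close v m (x + y - of_rat (q1 + q2))"
    using close_add by (fastforce simp: of_rat_add algebra_simps)
  then show "\<exists>q. close v m (x + y - of_rat q)" ..
qed

lemma Qp_minus: "x \<in> Qp v \<Longrightarrow> - x \<in> Qp v"
  unfolding Qp_iff
proof (intro allI)
  fix m
  assume "\<forall>m. \<exists>q. close v m (x - of_rat q)"
  then obtain q where "close v m (x - of_rat q)"
    by blast
  then have "close v m (- x - of_rat (- q))"
    using close_minus_iff[of m "x - of_rat q"] by (simp add: of_rat_minus algebra_simps)
  then show "\<exists>q. close v m (- x - of_rat q)" ..
qed

lemma Qp_diff: "x \<in> Qp v \<Longrightarrow> y \<in> Qp v \<Longrightarrow> x - y \<in> Qp v"
  using Qp_add[of x "- y"] Qp_minus[of y] by simp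

lemma Qp_mult:
  assumes "x \<in> Qp v" and "y \<in> Qp v"
  shows "x * y \<in> Qp v"
proof (cases "x = 0")
  case False
  show ?thesis
    unfolding Qp_iff
  proof
    fix m
    obtain q1 where q1: "close v (max (m - v y) (v x)) (x - of_rat q1)"
      using assms(1) unfolding Qp_iff by blast
    obtain q2 where q2: "close v (m - v x) (y - of_rat q2)"
      using assms(2) unfolding Qp_iff by blast
    have "close v (v x) (of_rat q1)"
      using close_diff[OF close_v[of x] close_mono[OF q1, of "v x"]] by simp
    from close_mult[OF this q2] have "close v m (of_rat q1 * (y - of_rat q2))"
      by simp
    moreover have "close v m ((x - of_rat q1) * y)"
      using close_mult[OF close_mono[OF q1, of "m - v y"] close_v[of y]] by simp
    ultimately have "close v m ((x - of_rat q1) * y + of_rat q1 * (y - of_rat q2))"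
      by (rule close_add[rotated])
    then have "close v m (x * y - of_rat (q1 * q2))"
      by (simp add: of_rat_mult algebra_simps)
    then show "\<exists>q. close v m (x * y - of_rat q)" ..
  qed
qed simp

lemma Qp_inverse:
  assumes "x \<in> Qp v"
  shows "inverse x \<in> Qp v"
proof (cases "x = 0")
  case False
  show ?thesis
    unfolding Qp_iff
  proof
    fix m
    obtain q where q: "close v (max (v x + 1) (m + 2 * v x)) (of_rat q - x)"
      using assms unfolding Qp_iff by (auto simp: close_minus_commute)
    have "of_rat q \<noteq> (0::'a)" and vq: "v (of_rat q) = v x"
      using v_add_dominant[OF False close_mono[OF q]] by auto
    then have "close v m ((of_rat q - x) / (x * of_rat q))"
      using close_divide[OF close_mono[OF q, of "m + 2 * v x"], of "x * of_rat q"] False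
      by (simp add: v_mult)
    moreover have "(of_rat q - x) / (x * of_rat q) = inverse x - inverse (of_rat q)"
      using \<open>of_rat q \<noteq> 0\<close> False by (simp add: field_simps)
    ultimately have "close v m (inverse x - of_rat (inverse q))"
      by (simp add: of_rat_inverse)
    then show "\<exists>q. close v m (inverse x - of_rat q)" ..
  qed
qed simp

lemma Qp_divide: "x \<in> Qp v \<Longrightarrow> y \<in> Qp v \<Longrightarrow> x / y \<in> Qp v"
  by (simp add: divide_inverse Qp_mult Qp_inverse)

lemma Qp_power: "x \<in> Qp v \<Longrightarrow> x ^ n \<in> Qp v"
  by (induction n) (auto intro: Qp_mult)

section \<open>Residues and powers close to 1\<close>

lemma rat_integral_residue:
  assumes "close v 0 (of_rat q :: 'a)"
  shows "\<exists>t<p. close v 1 (of_rat q - (of_nat t :: 'a))"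
proof -
  obtain a b where qab: "quotient_of q = (a, b)"
    by (cases "quotient_of q") auto
  have b_pos: "b > 0" and "coprime a b"
    using quotient_of_denom_pos[OF qab] quotient_of_coprime[OF qab] .
  have q_eq: "(of_rat q :: 'a) = of_int a / of_int b"
    using quotient_of_div[OF qab] by (simp add: of_rat_divide)
  have b_unit: "\<not> int p dvd b"
  proof
    assume p_dvd_b: "int p dvd b"
    then have "\<not> int p dvd a"
      using coprime_common_divisor[OF \<open>coprime a b\<close>] prime_gt_1_nat[OF prime_p] by fastforce
    then have "a \<noteq> 0" and "v (of_int a :: 'a) = 0"
      using v_of_int_eq_0 by auto
    moreover have "v (of_int b :: 'a) \<ge> 1"
      using v_of_int_ge_1[OF _ p_dvd_b] b_pos by simp
    ultimately show False
      using assms q_eq b_pos by (simp add: close_def v_divide)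
  qed
  then obtain t where t: "0 \<le> t" "t < int p" and "int p dvd a - t * b"
    using int_residue[OF prime_p] by blast
  then have "close v 1 (of_int (a - t * b) :: 'a)"
    using v_of_int_ge_1[of "a - t * b"] by (cases "a - t * b = 0") (auto simp: close_def)
  then have "close v 1 ((of_int (a - t * b) :: 'a) / of_int b)"
    using close_divide[of 1 _ "of_int b"] v_of_int_eq_0[OF b_unit] b_pos by simp
  moreover have "(of_int (a - t * b) :: 'a) / of_int b = of_rat q - of_nat (nat t)"
    using q_eq b_pos t by (simp add: field_simps)
  ultimately show ?thesis
    using t by (intro exI[of _ "nat t"]) auto
qed

lemma Qp_integral_residue:
  assumes "r \<in> Qp v" and "close v 0 r"
  shows "\<exists>t<p. close v 1 (r - of_nat t)"
proof -
  obtain q where q: "close v 1 (r - of_rat q)"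
    using assms(1) unfolding Qp_iff by blast
  have "close v 0 (of_rat q :: 'a)"
    using close_diff[OF assms(2) close_mono[OF q, of 0]] by simp
  then obtain t where "t < p" "close v 1 (of_rat q - (of_nat t :: 'a))"
    using rat_integral_residue by blast
  then show ?thesis
    using close_add[OF q] by fastforce
qed

lemma close_power_minus_one:
  assumes "close v \<kappa> (W - 1)" and "\<kappa> \<ge> 0"
  shows "close v \<kappa> (W ^ i - 1)"
proof -
  have "close v 0 (1::'a)"
    by (simp add: close_def)
  from close_add[OF this close_mono[OF assms]] have "close v 0 W"
    by simp
  then have "close v 0 (\<Sum>j<i. W ^ j)"
    by (simp add: close_sum close_power)
  from close_mult[OF assms(1) this] show ?thesis
    by (simp add: power_diff_1_eq)
qed

lemma close_geometric_sum:
  assumes "close v \<kappa> (W - 1)" and "\<kappa> \<ge> 0"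
  shows "close v \<kappa> ((\<Sum>j<t. W ^ j) - of_nat t)"
proof -
  have "(\<Sum>j<t. W ^ j) - of_nat t = (\<Sum>j<t. W ^ j - 1)"
    by (simp add: sum_subtractf)
  then show ?thesis
    using close_sum[of "{..<t}" \<kappa>] close_power_minus_one[OF assms] by simp
qed

lemma sum_lessThan_p: "(\<Sum>i<p. i) = p * ((p - 1) div 2)"
proof -
  have double_sum: "2 * (\<Sum>i<n. i) + n = n * n" for n :: nat
    by (induction n) (auto simp: algebra_simps)
  have "odd p"
    using prime_p p_ge_3 prime_odd_nat by simp
  then obtain h where "p = 2 * h + 1"
    by (auto elim!: oddE)
  then show ?thesis
    using double_sum[of p] by (simp add: algebra_simps)
qed

text \<open>
  Writing W = 1 + z with v z = \<kappa> \<ge> 1, the quotient (W^p - 1)/(W - 1) is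
  p + z p (p - 1)/2 modulo p^(2\<kappa>), which has valuation exactly 1 because p is odd.
\<close>
lemma v_power_p_minus_one:
  assumes "W \<noteq> 1" and "v (W - 1) = \<kappa>" and "\<kappa> \<ge> 1"
  shows "W ^ p \<noteq> 1" and "v (W ^ p - 1) = \<kappa> + 1"
proof -
  have close_W: "close v \<kappa> (W - 1)"
    using assms(2) by (simp add: close_def)
  define E where "E = (\<Sum>i<p. (\<Sum>j<i. W ^ j) - of_nat i)"
  have "close v \<kappa> E"
    unfolding E_def using assms(3) by (intro close_sum close_geometric_sum[OF close_W]) simp
  then have E_small: "close v 2 ((W - 1) * E)"
    using close_mult[OF close_W] assms(3) close_mono by fastforce
  have "close v 1 (of_nat p * of_nat ((p - 1) div 2) :: 'a)"
    using close_mult[OF close_v[of "of_nat p :: 'a"] close_of_nat[of "(p - 1) div 2"]] v_p by simp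
  then have p_small: "close v 2 ((W - 1) * (of_nat p * of_nat ((p - 1) div 2)))"
    using close_mult[OF close_W] assms(3) close_mono by fastforce
  have "(\<Sum>i<p. W ^ i) = of_nat p + (\<Sum>i<p. W ^ i - 1)"
    by (simp add: sum_subtractf)
  also have "(\<Sum>i<p. W ^ i - 1) = (W - 1) * (\<Sum>i<p. \<Sum>j<i. W ^ j)"
    by (simp add: power_diff_1_eq sum_distrib_left)
  also have "(\<Sum>i<p. \<Sum>j<i. W ^ j) = E + of_nat (\<Sum>i<p. i)"
    by (simp add: E_def sum_subtractf)
  also have "(of_nat (\<Sum>i<p. i) :: 'a) = of_nat p * of_nat ((p - 1) div 2)"
    by (simp only: sum_lessThan_p of_nat_mult)
  finally have "(\<Sum>i<p. W ^ i) = of_nat p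
      + ((W - 1) * E + (W - 1) * (of_nat p * of_nat ((p - 1) div 2)))"
    by (simp add: algebra_simps)
  moreover have "close v (v (of_nat p :: 'a) + 1)
      ((W - 1) * E + (W - 1) * (of_nat p * of_nat ((p - 1) div 2)))"
    using close_add[OF E_small p_small] v_p by simp
  ultimately have "(\<Sum>i<p. W ^ i) \<noteq> 0" and "v (\<Sum>i<p. W ^ i) = 1"
    using v_add_dominant[of "of_nat p"] v_p prime_p by (auto simp: prime_gt_0_nat)
  moreover have "W ^ p - 1 = (W - 1) * (\<Sum>i<p. W ^ i)"
    by (rule power_diff_1_eq)
  ultimately show "W ^ p \<noteq> 1" and "v (W ^ p - 1) = \<kappa> + 1"
    using assms by (auto simp: v_mult)
qed

lemma v_power_p_power_minus_one:
  assumes "w \<noteq> 1" and "v (w - 1) = k" and "k \<ge> 1"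
  shows "w ^ (p ^ j) \<noteq> 1 \<and> v (w ^ (p ^ j) - 1) = k + int j"
proof (induction j)
  case (Suc j)
  have "w ^ (p ^ Suc j) = (w ^ (p ^ j)) ^ p"
    by (simp add: power_mult[symmetric] mult.commute)
  then show ?case
    using v_power_p_minus_one[of "w ^ (p ^ j)" "k + int j"] Suc assms(3) by simp
qed (use assms in simp)

section \<open>Density of Moebius orbits\<close>

lemma vclosure_mono: "S \<subseteq> T \<Longrightarrow> vclosure v S \<subseteq> vclosure v T"
  unfolding vclosure_def by blast

context
  fixes g :: "nat \<Rightarrow> 'a" and e :: int
  assumes g_Qp: "\<And>N. g N \<in> Qp v"
    and step: "\<And>N j. g (N + p ^ j) - g N \<noteq> 0 \<and> v (g (N + p ^ j) - g N) = e + int j"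
    and linear: "\<And>N j t. t < p \<Longrightarrow>
      close v (e + int j + 1) (g (N + p ^ j * t) - g N - of_nat t * (g (N + p ^ j) - g N))"
begin

text \<open>
  The next base-p digit t of (z - g N) / (g (N + p^j) - g N) improves the approximation by one.
\<close>
lemma digit_step:
  assumes "z \<in> Qp v" and N: "close v (e + int j) (z - g N)"
  shows "\<exists>t. close v (e + int j + 1) (z - g (N + p ^ j * t))"
proof -
  define D where "D = g (N + p ^ j) - g N"
  have "D \<noteq> 0" and v_D: "v D = e + int j"
    using step[of N j] by (auto simp: D_def)
  define r where "r = (z - g N) / D"
  have "r \<in> Qp v"
    unfolding r_def D_def by (intro Qp_divide Qp_diff g_Qp assms(1))
  moreover have "close v 0 r"
    unfolding r_def using close_divide_iff[OF \<open>D \<noteq> 0\<close>] N v_D by simp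
  ultimately obtain t where "t < p" and t: "close v 1 (r - of_nat t)"
    using Qp_integral_residue by blast
  have "close v (e + int j + 1) (D * (r - of_nat t))"
    using close_mult[OF close_v[of D] t] v_D by simp
  moreover have "close v (e + int j + 1) (g (N + p ^ j * t) - g N - of_nat t * D)"
    using linear[OF \<open>t < p\<close>, of j N] by (simp add: D_def)
  ultimately have "close v (e + int j + 1)
      (D * (r - of_nat t) - (g (N + p ^ j * t) - g N - of_nat t * D))"
    by (rule close_diff)
  moreover have "D * (r - of_nat t) - (g (N + p ^ j * t) - g N - of_nat t * D)
      = D * r - g (N + p ^ j * t) + g N"
    by (simp add: algebra_simps)
  also have "\<dots> = z - g (N + p ^ j * t)"
    using \<open>D \<noteq> 0\<close> by (simp add: r_def)
  ultimately show ?thesis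
    by auto
qed

lemma ball_subset_vclosure_by_digits:
  assumes "z \<in> Qp v" and "close v e (z - g 0)"
  shows "z \<in> vclosure v (range g)"
  unfolding vclosure_def
proof (intro CollectI allI)
  fix m
  have "\<exists>N. close v (e + int j) (z - g N)" for j
  proof (induction j)
    case (Suc j)
    then show ?case
      using digit_step[OF assms(1)] by (fastforce simp: algebra_simps)
  qed (use assms(2) in auto)
  then obtain N where "close v (e + int (nat (m - e))) (z - g N)"
    by blast
  then have "close v m (z - g N)"
    by (rule close_mono) simp
  then show "\<exists>y\<in>range g. close v m (z - y)"
    by blast
qed

end

end

lemma moebius_diff:
  fixes \<alpha> \<beta> \<gamma> \<delta> y1 y2 :: "'a::field"
  assumes "\<gamma> * y1 + \<delta> \<noteq> 0" and "\<gamma> * y2 + \<delta> \<noteq> 0"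
  shows "(\<alpha> * y2 + \<beta>) / (\<gamma> * y2 + \<delta>) - (\<alpha> * y1 + \<beta>) / (\<gamma> * y1 + \<delta>)
       = (\<alpha> * \<delta> - \<beta> * \<gamma>) * (y2 - y1) / ((\<gamma> * y1 + \<delta>) * (\<gamma> * y2 + \<delta>))"
  using assms by (simp add: field_simps)

text \<open>
  The condition on \<gamma> makes all denominators agree modulo p^(\<mu> + 1), so that to first order
  the orbit moves like (\<alpha> \<delta> - \<beta> \<gamma>) B w^N / denom^2.
\<close>
locale moebius_orbit = padic_field p v for p :: nat and v :: "'a::field_char_0 \<Rightarrow> int" +
  fixes \<alpha> \<beta> \<gamma> \<delta> A B w :: 'a and k \<mu> :: int
  assumes w_ne_1: "w \<noteq> 1" and v_w_minus_1: "v (w - 1) = k" and k_pos: "k \<ge> 1"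
    and B_ne_0: "B \<noteq> 0" and v_B: "v B = 0"
    and det_ne_0: "\<alpha> * \<delta> - \<beta> * \<gamma> \<noteq> 0"
    and denom_ne_0: "\<And>N. \<gamma> * (A + B * w ^ N) + \<delta> \<noteq> 0"
    and v_denom: "\<And>N. v (\<gamma> * (A + B * w ^ N) + \<delta>) = \<mu>"
    and close_gamma: "close v (\<mu> - k + 1) \<gamma>"
    and orbit_in_Qp: "\<And>N. (\<alpha> * (A + B * w ^ N) + \<beta>) / (\<gamma> * (A + B * w ^ N) + \<delta>) \<in> Qp v"
begin

definition orbit :: "nat \<Rightarrow> 'a" where
  "orbit N = (\<alpha> * (A + B * w ^ N) + \<beta>) / (\<gamma> * (A + B * w ^ N) + \<delta>)"

abbreviation denom :: "nat \<Rightarrow> 'a" where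
  "denom N \<equiv> \<gamma> * (A + B * w ^ N) + \<delta>"

definition radius :: int where
  "radius = v (\<alpha> * \<delta> - \<beta> * \<gamma>) + k - 2 * \<mu>"

lemma v_power_w: "w ^ N \<noteq> 0 \<and> v (w ^ N) = 0"
  using unit_if_close_one[of w] v_w_minus_1 k_pos by (simp add: close_def v_power)

lemma orbit_diff:
  assumes "N \<le> M"
  shows "orbit M - orbit N
    = (\<alpha> * \<delta> - \<beta> * \<gamma>) * (B * w ^ N * (w ^ (M - N) - 1)) / (denom N * denom M)"
proof -
  have "orbit M - orbit N = (\<alpha> * \<delta> - \<beta> * \<gamma>) * (B * w ^ M - B * w ^ N) / (denom N * denom M)"
    unfolding orbit_def by (subst moebius_diff) (use denom_ne_0 in auto)
  moreover have "B * w ^ M - B * w ^ N = B * w ^ N * (w ^ (M - N) - 1)"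
    using assms by (simp add: algebra_simps flip: power_add)
  ultimately show ?thesis
    by simp
qed

lemma orbit_in_ball: "close v radius (orbit N - orbit 0)"
proof -
  have "close v k (w ^ N - 1)"
    using close_power_minus_one[of k w] v_w_minus_1 k_pos by (simp add: close_def)
  then have "close v (v (\<alpha> * \<delta> - \<beta> * \<gamma>) + (v B + k))
      ((\<alpha> * \<delta> - \<beta> * \<gamma>) * (B * (w ^ N - 1)))"
    by (intro close_mult close_v)
  moreover have "denom 0 * denom N \<noteq> 0" and "v (denom 0 * denom N) = 2 * \<mu>"
    using denom_ne_0[of 0] denom_ne_0[of N] v_denom[of 0] v_denom[of N]
    by (simp_all add: v_mult)
  ultimately show ?thesis
    using close_divide[of _ "(\<alpha> * \<delta> - \<beta> * \<gamma>) * (B * (w ^ N - 1))" "denom 0 * denom N"]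
      orbit_diff[of 0 N] v_B
    by (simp add: radius_def)
qed

lemma close_denom_ratio: "close v 1 (1 - denom N / denom M)"
proof -
  have "close v k (w ^ n - 1)" for n
    using close_power_minus_one[of k w] v_w_minus_1 k_pos by (simp add: close_def)
  from close_diff[OF this[of M] this[of N]] have "close v k (B * (w ^ M - w ^ N))"
    using close_mult[OF close_v[of B]] v_B by fastforce
  from close_mult[OF close_gamma this] have "close v (\<mu> + 1) (denom M - denom N)"
    by (simp add: algebra_simps)
  from close_divide[OF this denom_ne_0[of M]] have "close v 1 ((denom M - denom N) / denom M)"
    using v_denom[of M] by simp
  moreover have "(denom M - denom N) / denom M = 1 - denom N / denom M"
    using denom_ne_0[of M] by (simp add: field_simps)
  ultimately show ?thesis
    by simp
qed

definition increment :: "nat \<Rightarrow> nat \<Rightarrow> 'a" where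
  "increment N j = (\<alpha> * \<delta> - \<beta> * \<gamma>) * (B * w ^ N) / (denom N * denom N) * (w ^ (p ^ j) - 1)"

lemma v_increment: "increment N j \<noteq> 0 \<and> v (increment N j) = radius + int j"
  using det_ne_0 B_ne_0 v_B v_power_w[of N] denom_ne_0[of N] v_denom[of N]
    v_power_p_power_minus_one[OF w_ne_1 v_w_minus_1 k_pos, of j]
  by (auto simp: increment_def v_mult v_divide radius_def)

lemma orbit_increment:
  "close v (radius + int j + 1) (orbit (N + p ^ j * t) - orbit N - of_nat t * increment N j)"
proof -
  define W where "W = w ^ (p ^ j)"
  define G0 where "G0 = (\<alpha> * \<delta> - \<beta> * \<gamma>) * (B * w ^ N) / (denom N * denom N)"
  define G where "G = increment N j"
  define \<eta> where "\<eta> = (\<Sum>i<t. W ^ i) - of_nat t"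
  define \<epsilon> where "\<epsilon> = 1 - denom N / denom (N + p ^ j * t)"
  have G_eq: "G = G0 * (W - 1)"
    by (simp add: G_def G0_def W_def increment_def)
  have "close v (k + int j) (W - 1)"
    using v_power_p_power_minus_one[OF w_ne_1 v_w_minus_1 k_pos, of j]
    by (simp add: W_def close_def)
  then have close_\<eta>: "close v 1 \<eta>"
    unfolding \<eta>_def using close_geometric_sum close_mono k_pos by fastforce
  have "orbit (N + p ^ j * t) - orbit N
      = (\<alpha> * \<delta> - \<beta> * \<gamma>) * (B * w ^ N * (W ^ t - 1)) / (denom N * denom (N + p ^ j * t))"
    using orbit_diff[of N "N + p ^ j * t"] by (simp add: W_def power_mult)
  also have "\<dots> = G0 * (W ^ t - 1) * (1 - \<epsilon>)"
    using denom_ne_0[of N] by (simp add: G0_def \<epsilon>_def)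
  also have "\<dots> = of_nat t * G + G * (\<eta> - (of_nat t + \<eta>) * \<epsilon>)"
    unfolding G_eq \<eta>_def by (simp add: power_diff_1_eq algebra_simps)
  finally have "orbit (N + p ^ j * t) - orbit N - of_nat t * G = G * (\<eta> - (of_nat t + \<eta>) * \<epsilon>)"
    by simp
  moreover have "close v 1 (\<eta> - (of_nat t + \<eta>) * \<epsilon>)"
    using close_mult[OF close_add[OF close_of_nat close_mono[OF close_\<eta>]] close_denom_ratio] close_\<eta>
    by (intro close_diff) (auto simp: \<epsilon>_def)
  ultimately show ?thesis
    using close_mult[OF close_v[of G]] v_increment[of N j] by (simp add: G_def)
qed

lemma ball_subset_closure_orbit:
  assumes "z \<in> Qp v" and "close v radius (z - orbit 0)"
  shows "z \<in> vclosure v (range orbit)"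
proof (rule ball_subset_vclosure_by_digits[where g = orbit and e = radius])
  show "orbit N \<in> Qp v" for N
    using orbit_in_Qp by (simp add: orbit_def)
  fix N j
  note G = orbit_increment[of j N] and v_G = v_increment[of N j]
  have "close v (v (increment N j) + 1) (orbit (N + p ^ j) - orbit N - increment N j)"
    using G[of 1] v_G by simp
  from v_add_dominant[OF _ this]
  show "orbit (N + p ^ j) - orbit N \<noteq> 0 \<and> v (orbit (N + p ^ j) - orbit N) = radius + int j"
    using v_G by simp
  fix t :: nat
  have "close v (radius + int j + 1) (of_nat t * (orbit (N + p ^ j) - orbit N - increment N j))"
    using close_mult[OF close_of_nat G[of 1]] by simp
  from close_diff[OF G[of t] this]
  show "close v (radius + int j + 1)
      (orbit (N + p ^ j * t) - orbit N - of_nat t * (orbit (N + p ^ j) - orbit N))"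
    by (simp add: algebra_simps)
qed (use assms in auto)

end

context padic_field
begin

lemma coset_iff: "z \<in> coset v c m \<longleftrightarrow> z - c \<in> Qp v \<and> close v m (z - c)"
  unfolding coset_def pZp_def by (auto intro: image_eqI[of _ _ "z - c"])

lemma pZp_eq_coset_0: "pZp v m = coset v 0 m"
  unfolding coset_def by simp

lemma coset_subset_Qp: "c \<in> Qp v \<Longrightarrow> coset v c m \<subseteq> Qp v"
  using Qp_add[of _ c] by (force simp: coset_iff)

lemma coset_absorb:
  assumes "c \<in> Qp v" and "z \<in> Qp v" and "s \<in> coset v c m" and "close v m (z - s)"
  shows "z \<in> coset v c m"
proof -
  have "close v m ((z - s) + (s - c))"
    using assms(3,4) by (intro close_add) (simp_all add: coset_iff)
  then show ?thesis
    using Qp_diff[OF assms(2,1)] by (simp add: coset_iff)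
qed

lemma coset_complement_absorb:
  assumes "c \<in> Qp v" and "z \<in> Qp v" and "s \<in> Qp v - coset v c m" and "close v m (z - s)"
  shows "z \<in> Qp v - coset v c m"
  using assms coset_absorb[OF assms(1), of s z m] by (auto simp: close_minus_commute)

lemma coset_disjoint:
  assumes "c \<noteq> d" and "v (c - d) < min m n"
  shows "coset v c m \<inter> coset v d n = {}"
proof -
  have False if "close v m (z - c)" and "close v n (z - d)" for z
  proof -
    have "close v (min m n) ((z - d) - (z - c))"
      using close_diff[OF close_mono[OF that(2)] close_mono[OF that(1)]] by simp
    with assms show False
      by (simp add: close_def min_le_iff_disj)
  qed
  then show ?thesis
    by (auto simp: coset_iff)
qed

text \<open>A set that is a union of balls of a fixed radius within Q_p is closed.\<close>
lemma vclosure_subset: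
  assumes "S \<subseteq> T" and "\<And>z s. z \<in> Qp v \<Longrightarrow> s \<in> T \<Longrightarrow> close v m (z - s) \<Longrightarrow> z \<in> T"
  shows "Qp v \<inter> vclosure v S \<subseteq> T"
  using assms unfolding vclosure_def by blast

section \<open>The order of a unit modulo p\<close>

lemma power_residues:
  assumes "u * u = \<tau> * u - 1" and "\<tau> \<in> Qp v" and "close v 0 \<tau>" and "close v 0 u"
  shows "\<exists>t1<p. \<exists>t2<p. close v 1 (u ^ n - (of_nat t1 * u + of_nat t2))"
proof -
  have "\<exists>A B. A \<in> Qp v \<and> B \<in> Qp v \<and> close v 0 A \<and> close v 0 B \<and> u ^ n = A * u + B"
  proof (induction n)
    case 0
    show ?case
      by (intro exI[of _ 0] exI[of _ 1]) (simp add: close_def)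
  next
    case (Suc n)
    then obtain A B where AB: "A \<in> Qp v" "B \<in> Qp v" "close v 0 A" "close v 0 B"
      and "u ^ n = A * u + B"
      by blast
    then have "u ^ Suc n = A * (u * u) + B * u"
      by (simp add: algebra_simps)
    also have "\<dots> = (\<tau> * A + B) * u + (- A)"
      unfolding assms(1) by (simp add: algebra_simps)
    finally have "u ^ Suc n = (\<tau> * A + B) * u + (- A)" .
    moreover have "close v 0 (\<tau> * A + B)"
      using close_mult[OF assms(3) AB(3)] AB(4) by (simp add: close_add)
    ultimately show ?case
      using AB assms(2)
      by (intro exI[of _ "\<tau> * A + B"] exI[of _ "- A"]) (simp add: Qp_add Qp_mult Qp_minus)
  qed
  then obtain A B where "A \<in> Qp v" "B \<in> Qp v" "close v 0 A" "close v 0 B"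
    and u_n: "u ^ n = A * u + B"
    by blast
  then obtain t1 t2 where "t1 < p" "t2 < p"
    and t1: "close v 1 (A - of_nat t1)" and t2: "close v 1 (B - of_nat t2)"
    using Qp_integral_residue by meson
  have "close v 1 ((A - of_nat t1) * u + (B - of_nat t2))"
    using close_mult[OF t1 assms(4)] t2 by (simp add: close_add)
  then show ?thesis
    using \<open>t1 < p\<close> \<open>t2 < p\<close> u_n by (auto simp: algebra_simps)
qed

text \<open>
  The residues modulo p of the powers u^n = A_n u + B_n are determined by those of A_n, B_n, so
  two of the first p^2 + 1 of them agree.
\<close>
lemma unit_power_close_one:
  assumes "u \<noteq> 0" and "v u = 0" and "u + inverse u \<in> Qp v"
  shows "\<exists>d>0. close v 1 (u ^ d - 1)"
proof -
  define \<tau> where "\<tau> = u + inverse u"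
  have "u * u = \<tau> * u - 1"
    using assms(1) by (simp add: \<tau>_def field_simps)
  moreover have "close v 0 \<tau>"
    unfolding \<tau>_def using assms(1,2) by (intro close_add) (auto simp: close_def v_inverse)
  moreover have "close v 0 u"
    using assms(2) by (simp add: close_def)
  ultimately have "\<forall>n. \<exists>t. t \<in> {..<p} \<times> {..<p} \<and>
      close v 1 (u ^ n - (of_nat (fst t) * u + of_nat (snd t)))"
    using power_residues[of u \<tau>] assms(3) unfolding \<tau>_def by fastforce
  then obtain F where F: "\<And>n. F n \<in> {..<p} \<times> {..<p}"
    and close_F: "\<And>n. close v 1 (u ^ n - (of_nat (fst (F n)) * u + of_nat (snd (F n))))"
    by metis
  have "F ` {..p * p} \<subseteq> {..<p} \<times> {..<p}"
    using F by blast
  then have "card (F ` {..p * p}) \<le> card ({..<p} \<times> {..<p})"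
    by (intro card_mono) auto
  then have "\<not> inj_on F {..p * p}"
    by (intro pigeonhole) (simp add: card_cartesian_product)
  then obtain n1 n2 where "n1 < n2" and "F n1 = F n2"
    unfolding inj_on_def by (metis atMost_iff nat_neq_iff)
  then have "close v 1 (u ^ n2 - u ^ n1)"
    using close_diff[OF close_F[of n2] close_F[of n1]] by simp
  moreover have "u ^ n2 - u ^ n1 = u ^ n1 * (u ^ (n2 - n1) - 1)"
    using \<open>n1 < n2\<close> by (simp add: algebra_simps flip: power_add)
  ultimately have "close v 1 (u ^ (n2 - n1) - 1)"
    using close_mult_iff[of "u ^ n1" 1] assms(1,2) by (simp add: v_power)
  then show ?thesis
    using \<open>n1 < n2\<close> by (intro exI[of _ "n2 - n1"]) simp
qed

end

section \<open>Residue classes of the ratios of the sequence\<close>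

locale kepler_setting = padic_field p v for p :: nat and v :: "'a::field_char_0 \<Rightarrow> int" +
  fixes a :: "nat \<Rightarrow> 'a" and c1 c2 lam1 lam2 :: 'a
  assumes a_closed_form: "\<And>n. a n = c1 * lam1 ^ n + c2 * lam2 ^ n"
    and c1_ne_0: "c1 \<noteq> 0" and c2_ne_0: "c2 \<noteq> 0"
    and lam1_ne_0: "lam1 \<noteq> 0" and lam2_ne_0: "lam2 \<noteq> 0"
    and v_lam: "v lam1 = v lam2"
    and not_root_of_unity: "\<not> (\<exists>n>0. (lam2 / lam1) ^ n = 1)"
    and a_in_Qp: "\<And>n. a n \<in> Qp v"
begin

definition x :: 'a where "x = c1 / c2"
definition u :: 'a where "u = lam2 / lam1"
definition l :: nat where "l = ord_mod_p v u"
definition w :: 'a where "w = u ^ l"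
definition k :: int where "k = v (w - 1)"
definition y :: "nat \<Rightarrow> 'a" where "y n = x + u ^ n"
definition C :: 'a where "C = x * (lam1 - lam2)"
definition centre :: 'a where "centre = (lam1 + lam2) / 2"
definition D :: 'a where "D = (lam2 - lam1) / 2"
definition ratio :: "nat \<Rightarrow> 'a" where "ratio n = a (Suc n) / a n"
definition ratios :: "'a set" where "ratios = {a (Suc n) / a n | n. a n \<noteq> 0}"

lemma x_ne_0: "x \<noteq> 0"
  by (simp add: x_def c1_ne_0 c2_ne_0)

lemma u_ne_0: "u \<noteq> 0"
  by (simp add: u_def lam1_ne_0 lam2_ne_0)

lemma v_u: "v u = 0"
  by (simp add: u_def v_divide lam1_ne_0 lam2_ne_0 v_lam)

lemma v_u_power: "u ^ n \<noteq> 0 \<and> v (u ^ n) = 0"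
  using u_ne_0 v_u by (simp add: v_power)

lemma u_power_ne_1: "n > 0 \<Longrightarrow> u ^ n \<noteq> 1"
  using not_root_of_unity unfolding u_def by blast

lemma lam1_ne_lam2: "lam1 \<noteq> lam2"
  using u_power_ne_1[of 1] lam1_ne_0 by (auto simp: u_def)

lemma C_ne_0: "C \<noteq> 0"
  using x_ne_0 lam1_ne_lam2 by (simp add: C_def)

lemma v_C: "v C = v x + v (lam1 - lam2)"
  using x_ne_0 lam1_ne_lam2 by (simp add: C_def v_mult)

lemma v_lam_diff: "v (lam1 - lam2) = v lam1 + v (u - 1)"
proof -
  have "lam1 - lam2 = lam1 * (1 - u)"
    using lam1_ne_0 by (simp add: u_def field_simps)
  moreover have "1 - u \<noteq> 0"
    using u_power_ne_1[of 1] by simp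
  ultimately show ?thesis
    using lam1_ne_0 v_minus_commute[of 1 u] by (simp add: v_mult)
qed

lemma a_eq: "a n = c2 * lam1 ^ n * y n"
  using lam1_ne_0 c2_ne_0 by (simp add: a_closed_form y_def x_def u_def field_simps power_divide)

lemma a_ne_0_iff: "a n \<noteq> 0 \<longleftrightarrow> y n \<noteq> 0"
  using lam1_ne_0 c2_ne_0 by (simp add: a_eq)

lemma ratio_eq: "y n \<noteq> 0 \<Longrightarrow> ratio n = (lam2 * y n + C) / y n"
proof -
  assume "y n \<noteq> 0"
  then have "ratio n = lam1 * y (Suc n) / y n"
    using lam1_ne_0 c2_ne_0 by (simp add: ratio_def a_eq field_simps)
  moreover have "lam1 * y (Suc n) = lam2 * y n + C"
    using lam1_ne_0 by (simp add: y_def C_def u_def field_simps)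
  ultimately show ?thesis
    by simp
qed

lemma ratio_eq': "y n \<noteq> 0 \<Longrightarrow> ratio n = lam2 + C / y n"
  using ratio_eq[of n] by (simp add: field_simps)

lemma ratio_minus_centre: "y n \<noteq> 0 \<Longrightarrow> ratio n - centre = (D * y n + C) / y n"
proof -
  assume "y n \<noteq> 0"
  then have "ratio n - centre = D + C / y n"
    unfolding ratio_eq'[OF \<open>y n \<noteq> 0\<close>] D_def centre_def by (simp add: field_simps)
  with \<open>y n \<noteq> 0\<close> show ?thesis
    by (simp add: field_simps)
qed

lemma v_D: "D \<noteq> 0 \<and> v D = v (lam1 - lam2)"
  using lam1_ne_lam2 v_two v_minus_commute[of lam1 lam2] by (simp add: D_def v_divide)

lemma ratio_in_Qp: "ratio n \<in> Qp v"
  by (simp add: ratio_def Qp_divide a_in_Qp)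

lemma ratio_in_ratios: "y n \<noteq> 0 \<Longrightarrow> ratio n \<in> ratios"
  unfolding ratios_def ratio_def using a_ne_0_iff by blast

lemma ratios_eq: "ratios = ratio ` {n. y n \<noteq> 0}"
  unfolding ratios_def ratio_def using a_ne_0_iff by blast

lemma kepler_set_eq: "kepler_set v a = Qp v \<inter> vclosure v ratios"
  by (simp add: kepler_set_def ratios_def)

text \<open>The sum and product of lam1, lam2 are rational functions of a 0, ..., a 3.\<close>
lemma lam_sum_prod_in_Qp: "lam1 + lam2 \<in> Qp v" "lam1 * lam2 \<in> Qp v"
proof -
  have det: "a 1 ^ 2 - a 0 * a 2 = - c1 * c2 * (lam1 - lam2) ^ 2"
    by (simp add: a_closed_form power2_eq_square algebra_simps)
  have "a 1 * a 2 - a 0 * a 3 = - c1 * c2 * (lam1 - lam2) ^ 2 * (lam1 + lam2)"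
    and "a 2 ^ 2 - a 1 * a 3 = - c1 * c2 * (lam1 - lam2) ^ 2 * (lam1 * lam2)"
    by (simp_all add: a_closed_form power2_eq_square power3_eq_cube algebra_simps)
  moreover have "- c1 * c2 * (lam1 - lam2) ^ 2 \<noteq> 0"
    using c1_ne_0 c2_ne_0 lam1_ne_lam2 by simp
  ultimately have "lam1 + lam2 = (a 1 * a 2 - a 0 * a 3) / (a 1 ^ 2 - a 0 * a 2)"
    and "lam1 * lam2 = (a 2 ^ 2 - a 1 * a 3) / (a 1 ^ 2 - a 0 * a 2)"
    unfolding det by simp_all
  then show "lam1 + lam2 \<in> Qp v" "lam1 * lam2 \<in> Qp v"
    by (simp_all add: Qp_divide Qp_diff Qp_mult Qp_power a_in_Qp)
qed

lemma centre_in_Qp: "centre \<in> Qp v"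
  unfolding centre_def by (simp add: Qp_divide lam_sum_prod_in_Qp)

lemma order_of_u:
  shows l_pos: "l \<ge> 1" and close_u_l: "close v 1 (u ^ l - 1)"
    and not_close_u_power: "\<And>i. 0 < i \<Longrightarrow> i < l \<Longrightarrow> \<not> close v 1 (u ^ i - 1)"
proof -
  have "u + inverse u = ((lam1 + lam2) ^ 2 - 2 * (lam1 * lam2)) / (lam1 * lam2)"
    using lam1_ne_0 lam2_ne_0 by (simp add: u_def field_simps power2_eq_square)
  then have "u + inverse u \<in> Qp v"
    by (simp add: Qp_divide Qp_diff Qp_mult Qp_power lam_sum_prod_in_Qp)
  then obtain d where "d > 0" and "close v 1 (u ^ d - 1)"
    using unit_power_close_one u_ne_0 v_u by blast
  then have ex: "\<exists>l. 1 \<le> l \<and> cong_pm v 1 (u ^ l) 1"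
    by (intro exI[of _ d]) (simp add: cong_pm_def)
  show "l \<ge> 1" and "close v 1 (u ^ l - 1)"
    using LeastI_ex[OF ex] by (simp_all add: l_def ord_mod_p_def cong_pm_def)
  fix i
  assume "0 < i" and "i < l"
  with not_less_Least[of i "\<lambda>l. 1 \<le> l \<and> cong_pm v 1 (u ^ l) 1"]
  show "\<not> close v 1 (u ^ i - 1)"
    by (simp add: l_def ord_mod_p_def cong_pm_def)
qed

lemma w_ne_1: "w \<noteq> 1"
  unfolding w_def using u_power_ne_1 l_pos by simp

lemma k_pos: "k \<ge> 1"
  using close_u_l w_ne_1 by (simp add: close_def k_def w_def)

lemma close_w_minus_1: "close v k (w - 1)"
  by (simp add: k_def close_def)

lemma v_u_power_diff:
  assumes "i < l" and "j < l" and "i \<noteq> j"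
  shows "u ^ i - u ^ j \<noteq> 0 \<and> v (u ^ i - u ^ j) = 0"
proof -
  have *: "u ^ i - u ^ j \<noteq> 0 \<and> v (u ^ i - u ^ j) = 0" if "j < i" "i < l" for i j
  proof -
    have eq: "u ^ i - u ^ j = u ^ j * (u ^ (i - j) - 1)"
      using that by (simp add: algebra_simps flip: power_add)
    have "u ^ (i - j) - 1 \<noteq> 0"
      using u_power_ne_1[of "i - j"] that by simp
    moreover have "close v 0 (u ^ (i - j) - 1)"
      using close_diff[OF close_power[of u "i - j"] close_of_nat[of 1]] v_u by (simp add: close_def)
    moreover have "\<not> close v 1 (u ^ (i - j) - 1)"
      using not_close_u_power[of "i - j"] that by simp
    ultimately show ?thesis
      unfolding eq using v_u_power[of j] by (simp add: close_def v_mult)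
  qed
  show ?thesis
    using *[of j i] *[of i j] assms v_minus_commute[of "u ^ i"] by (cases "j < i") auto
qed

lemma y_shift: "y (i + l * N) = x + u ^ i * w ^ N"
  by (simp add: y_def w_def power_add power_mult)

lemma close_y_shift: "close v k (y (i + l * N) - y i)"
proof -
  have "y (i + l * N) - y i = u ^ i * (w ^ N - 1)"
    unfolding y_shift by (simp add: y_def algebra_simps)
  moreover have "close v k (w ^ N - 1)"
    using close_power_minus_one[OF close_w_minus_1] k_pos by simp
  ultimately show ?thesis
    using close_mult[OF close_v[of "u ^ i"]] v_u_power by fastforce
qed

lemma regular_class_y:
  assumes "y i \<noteq> 0" and "v (y i) < k"
  shows "y (i + l * N) \<noteq> 0 \<and> v (y (i + l * N)) = v (y i)"
  using v_add_dominant[OF assms(1) close_mono[OF close_y_shift[of i N]]] assms(2) by simp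

lemma regular_class:
  assumes "y i \<noteq> 0" and "v (y i) < k"
  shows "ratio (i + l * N) \<in> coset v (ratio i) (v C + k - 2 * v (y i))"
    and "coset v (ratio i) (v C + k - 2 * v (y i)) \<subseteq> vclosure v ratios"
proof -
  note y_N = regular_class_y[OF assms]
  have ratio_on_class: "(lam2 * (x + u ^ i * w ^ N) + C) / (x + u ^ i * w ^ N) = ratio (i + l * N)" for N
    using ratio_eq y_N by (simp add: y_shift)
  interpret M: moebius_orbit p v lam2 C 1 0 x "u ^ i" w k "v (y i)"
    using padic_valuation prime_p p_ge_3 w_ne_1 k_def k_pos v_u_power C_ne_0 y_N assms(2)
      ratio_in_Qp
    by unfold_locales (auto simp: close_def y_shift ratio_on_class)
  have orbit_eq: "M.orbit N = ratio (i + l * N)" for N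
    using ratio_on_class by (simp add: M.orbit_def)
  have radius_eq: "M.radius = v C + k - 2 * v (y i)"
    by (simp add: M.radius_def)
  show "ratio (i + l * N) \<in> coset v (ratio i) (v C + k - 2 * v (y i))"
    using M.orbit_in_ball[of N] orbit_eq[of N] orbit_eq[of 0] radius_eq
    by (simp add: coset_iff Qp_diff ratio_in_Qp)
  have "range M.orbit \<subseteq> ratios"
    using orbit_eq y_N ratio_in_ratios by auto
  show "coset v (ratio i) (v C + k - 2 * v (y i)) \<subseteq> vclosure v ratios"
  proof
    fix z
    assume z: "z \<in> coset v (ratio i) (v C + k - 2 * v (y i))"
    then have "z \<in> Qp v"
      using coset_subset_Qp[OF ratio_in_Qp] by blast
    moreover have "close v M.radius (z - M.orbit 0)"
      using z orbit_eq[of 0] radius_eq by (simp add: coset_iff)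
    ultimately have "z \<in> vclosure v (range M.orbit)"
      by (rule M.ball_subset_closure_orbit)
    with \<open>range M.orbit \<subseteq> ratios\<close> show "z \<in> vclosure v ratios"
      using vclosure_mono by blast
  qed
qed

lemma pole_class_v_x:
  assumes "close v k (y s)"
  shows "v x = 0"
proof -
  have "close v (v (- (u ^ s)) + 1) (y s)"
    using close_mono[OF assms] k_pos v_u_power[of s] by simp
  from v_add_dominant(2)[OF _ this] show ?thesis
    using v_u_power[of s] by (simp add: y_def)
qed

lemma pole_class_denom:
  assumes "close v k (y s)"
  shows "close v k (y (s + l * N))" and "D * y (s + l * N) + C \<noteq> 0"
    and "v (D * y (s + l * N) + C) = v C"
proof -
  show close_y: "close v k (y (s + l * N))"
    using close_add[OF assms close_y_shift[of s N]] by simp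
  have "v C = v D"
    using v_C v_D pole_class_v_x[OF assms] by simp
  then have "close v (v C + 1) (D * y (s + l * N))"
    using close_mult[OF close_v[of D] close_y] k_pos close_mono by fastforce
  from v_add_dominant[OF C_ne_0 this]
  show "D * y (s + l * N) + C \<noteq> 0" and "v (D * y (s + l * N) + C) = v C"
    by (simp_all add: add.commute)
qed

lemma pole_class_orbit:
  assumes "close v k (y s)" and "z \<in> Qp v" and "close v (k - v C) z"
  shows "z \<in> vclosure v (range (\<lambda>N. y (s + l * N) / (D * y (s + l * N) + C)))"
proof -
  note denom = pole_class_denom[OF assms(1)]
  have orbit_in_Qp: "y n / (D * y n + C) \<in> Qp v" if "D * y n + C \<noteq> 0" for n
  proof (cases "y n = 0")
    case False
    then have "y n / (D * y n + C) = inverse (ratio n - centre)"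
      using ratio_minus_centre[OF False] by simp
    then show ?thesis
      by (simp add: Qp_inverse Qp_diff ratio_in_Qp centre_in_Qp)
  qed simp
  interpret M: moebius_orbit p v 1 0 D C x "u ^ s" w k "v C"
    using padic_valuation prime_p p_ge_3 w_ne_1 k_def k_pos v_u_power C_ne_0 v_D v_C
      pole_class_v_x[OF assms(1)] denom(2,3) orbit_in_Qp[of "s + l * _"]
    by unfold_locales (auto simp: close_def y_shift)
  have orbit_eq: "M.orbit = (\<lambda>N. y (s + l * N) / (D * y (s + l * N) + C))"
    by (simp add: fun_eq_iff M.orbit_def y_shift)
  have "close v (k - v C) (M.orbit 0)"
    using close_divide[OF assms(1) denom(2)[of 0]] denom(3)[of 0] by (simp add: orbit_eq)
  then have "close v M.radius (z - M.orbit 0)"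
    using close_diff[OF assms(3)] by (simp add: M.radius_def)
  from M.ball_subset_closure_orbit[OF assms(2) this] show ?thesis
    by (simp add: orbit_eq)
qed

lemma pole_class_fills_complement:
  assumes "close v k (y s)" and "z \<in> Qp v" and "z \<noteq> centre" and "v (z - centre) \<le> v C - k"
  shows "z \<in> vclosure v ratios"
  unfolding vclosure_def
proof (intro CollectI allI)
  fix m
  define q where "q = inverse (z - centre)"
  have "q \<noteq> 0" and "q \<in> Qp v" and "close v (k - v C) q"
    using assms(2-4) by (auto simp: q_def Qp_inverse Qp_diff centre_in_Qp close_def v_inverse)
  from pole_class_orbit[OF assms(1) this(2,3)] obtain N
    where N: "close v (max (v q + 1) (m + 2 * v q)) (y (s + l * N) / (D * y (s + l * N) + C) - q)"
    unfolding vclosure_def by (auto simp: close_minus_commute)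
  define n where "n = s + l * N"
  define h where "h = y n / (D * y n + C)"
  have "h \<noteq> 0" and "v h = v q"
    using v_add_dominant[OF \<open>q \<noteq> 0\<close> close_mono[OF N]] by (simp_all add: h_def n_def)
  then have "y n \<noteq> 0"
    by (auto simp: h_def)
  then have "ratio n - centre = inverse h"
    using ratio_minus_centre by (simp add: h_def)
  then have "z - ratio n = (z - centre) - inverse h"
    by (simp add: algebra_simps)
  also have "\<dots> = inverse q - inverse h"
    by (simp add: q_def)
  also have "\<dots> = (h - q) / (q * h)"
    using \<open>q \<noteq> 0\<close> \<open>h \<noteq> 0\<close> by (simp add: field_simps)
  finally have "z - ratio n = (h - q) / (q * h)" .
  moreover have "close v (m + 2 * v q) (h - q)"
    using close_mono[OF N] by (simp add: h_def n_def)
  ultimately have "close v m (z - ratio n)"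
    using close_divide[of "m + 2 * v q" "h - q" "q * h"] \<open>q \<noteq> 0\<close> \<open>h \<noteq> 0\<close> \<open>v h = v q\<close>
    by (simp add: v_mult)
  then show "\<exists>r\<in>ratios. close v m (z - r)"
    using ratio_in_ratios[OF \<open>y n \<noteq> 0\<close>] by blast
qed

lemma pole_class_minus_x_in_closure:
  assumes "close v k (y s)"
  shows "- x \<in> vclosure v (range (\<lambda>n. u ^ n))"
  unfolding vclosure_def
proof (intro CollectI allI)
  fix m
  from pole_class_orbit[OF assms zero_in_Qp] obtain N
    where N: "close v (m - v C) (y (s + l * N) / (D * y (s + l * N) + C))"
    unfolding vclosure_def by (auto simp: close_def)
  then have "close v m (y (s + l * N))"
    using close_divide_iff pole_class_denom[OF assms] by simp
  then show "\<exists>r\<in>range (\<lambda>n. u ^ n). close v m (- x - r)"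
    by (auto simp: y_def close_minus_commute[of m "- x"] algebra_simps)
qed

lemma v_ratio_diff:
  assumes "i < l" and "j < l" and "i \<noteq> j" and "y i \<noteq> 0" and "y j \<noteq> 0"
  shows "ratio i \<noteq> ratio j \<and> v (ratio i - ratio j) = v C - v (y i) - v (y j)"
proof -
  have "ratio i - ratio j = C * (y j - y i) / (y i * y j)"
    unfolding ratio_eq'[OF assms(4)] ratio_eq'[OF assms(5)] using assms(4,5)
    by (simp add: field_simps)
  moreover have "y j - y i = - (u ^ i - u ^ j)"
    by (simp add: y_def)
  ultimately show ?thesis
    using v_u_power_diff[OF assms(1-3)] C_ne_0 assms(4,5) v_minus_commute[of "u ^ j"]
    by (auto simp: v_mult v_divide)
qed

section \<open>The Kepler set\<close>

lemma close_centre: "close v (v lam1) centre"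
proof -
  have "close v (v lam1) (lam1 + lam2)"
    using v_lam by (intro close_add close_v) (simp add: close_def)
  then show ?thesis
    using close_divide[of _ "lam1 + lam2" 2] v_two by (simp add: centre_def)
qed

context
  assumes no_pole: "- x \<notin> vclosure v (range (\<lambda>n. u ^ n))"
begin

lemma y_regular: "y n \<noteq> 0 \<and> v (y n) < k"
  using pole_class_minus_x_in_closure[of n] no_pole by (force simp: close_def)

lemma v_y_diff_lt_k: "v (y i) - v (y j) < k"
proof (cases "v x < 0")
  case True
  then have "v (y n) = v x" for n
    using v_add_dominant(2)[OF x_ne_0, of "u ^ n"] v_u_power[of n] by (simp add: y_def close_def)
  then show ?thesis
    using k_pos by simp
next
  case False
  then have "close v 0 (y n)" for n
    unfolding y_def using x_ne_0 v_u_power[of n] by (intro close_add) (auto simp: close_def)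
  then have "v (y j) \<ge> 0"
    using y_regular by (auto simp: close_def)
  with y_regular[of i] show ?thesis
    by linarith
qed

lemma regular_cosets_disjoint:
  assumes "i < l" and "j < l" and "i \<noteq> j"
  shows "coset v (ratio i) (v C + k - 2 * v (y i)) \<inter> coset v (ratio j) (v C + k - 2 * v (y j)) = {}"
  using v_ratio_diff[OF assms] y_regular v_y_diff_lt_k[of i j] v_y_diff_lt_k[of j i]
  by (intro coset_disjoint) auto

theorem kepler_set_without_pole:
  "kepler_set v a = (\<Union>i<l. coset v (ratio i) (v C + k - 2 * v (y i)))"
proof
  define m where "m = Max ((\<lambda>i. v C + k - 2 * v (y i)) ` {..<l})"
  show "kepler_set v a \<subseteq> (\<Union>i<l. coset v (ratio i) (v C + k - 2 * v (y i)))"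
    unfolding kepler_set_eq
  proof (rule vclosure_subset[where m = m])
    show "ratios \<subseteq> (\<Union>i<l. coset v (ratio i) (v C + k - 2 * v (y i)))"
    proof
      fix r
      assume "r \<in> ratios"
      then obtain n where "r = ratio n"
        by (auto simp: ratios_eq)
      then have "r \<in> coset v (ratio (n mod l)) (v C + k - 2 * v (y (n mod l)))"
        using regular_class(1)[of "n mod l" "n div l"] y_regular by simp
      moreover have "n mod l < l"
        using l_pos by simp
      ultimately show "r \<in> (\<Union>i<l. coset v (ratio i) (v C + k - 2 * v (y i)))"
        by blast
    qed
  next
    fix z r
    assume "z \<in> Qp v" and "r \<in> (\<Union>i<l. coset v (ratio i) (v C + k - 2 * v (y i)))"
      and "close v m (z - r)"
    then obtain i where "i < l" and "r \<in> coset v (ratio i) (v C + k - 2 * v (y i))"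
      by blast
    moreover have "v C + k - 2 * v (y i) \<le> m"
      unfolding m_def using \<open>i < l\<close> by (intro Max_ge) auto
    ultimately show "z \<in> (\<Union>i<l. coset v (ratio i) (v C + k - 2 * v (y i)))"
      using coset_absorb[OF ratio_in_Qp \<open>z \<in> Qp v\<close>] close_mono[OF \<open>close v m (z - r)\<close>]
      by blast
  qed
  show "(\<Union>i<l. coset v (ratio i) (v C + k - 2 * v (y i))) \<subseteq> kepler_set v a"
    using regular_class(2) y_regular coset_subset_Qp[OF ratio_in_Qp]
    by (fastforce simp: kepler_set_eq)
qed

end

context
  assumes pole: "- x \<in> vclosure v (range (\<lambda>n. u ^ n))" and l_eq_1: "l = 1"
begin

lemma close_y_order_1: "close v k (y n)"
proof -
  have close_u_power: "close v k (u ^ n - 1)" for n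
    using close_power_minus_one[OF close_w_minus_1] k_pos l_eq_1 by (simp add: w_def)
  obtain n1 where "close v k (- x - u ^ n1)"
    using pole unfolding vclosure_def by blast
  then have "close v k (y n1)"
    using close_minus_iff[of k "y n1"] by (simp add: y_def)
  from close_diff[OF this close_u_power[of n1]] have "close v k (x + 1)"
    by (simp add: y_def)
  then show ?thesis
    using close_add[OF _ close_u_power[of n], of "x + 1"] by (simp add: y_def)
qed

lemma v_C_order_1: "v C = v lam1 + k"
  using v_C pole_class_v_x[OF close_y_order_1] v_lam_diff k_def l_eq_1 by (simp add: w_def)

lemma ratio_far_from_centre:
  assumes "y n \<noteq> 0"
  shows "\<not> close v (1 + v lam2) (ratio n - centre)"
proof -
  have "C / y n \<noteq> 0" and v_pole: "v (C / y n) \<le> v lam1"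
    using C_ne_0 assms close_y_order_1[of n] v_C_order_1 by (auto simp: v_divide close_def)
  moreover have "close v (v (C / y n) + 1) D"
    using v_D v_lam_diff k_def k_pos l_eq_1 v_pole by (simp add: close_def w_def)
  moreover have "ratio n - centre = C / y n + D"
    using ratio_minus_centre[OF assms] assms by (simp add: field_simps)
  ultimately show ?thesis
    using v_add_dominant[of "C / y n" D] v_lam by (simp add: close_def)
qed

theorem kepler_set_pole_order_1: "kepler_set v a = Qp v - coset v centre (1 + v lam2)"
proof
  show "kepler_set v a \<subseteq> Qp v - coset v centre (1 + v lam2)"
    unfolding kepler_set_eq
  proof (rule vclosure_subset)
    show "ratios \<subseteq> Qp v - coset v centre (1 + v lam2)"
      using ratio_far_from_centre ratio_in_Qp by (auto simp: ratios_eq coset_iff)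
  qed (rule coset_complement_absorb[OF centre_in_Qp])
  show "Qp v - coset v centre (1 + v lam2) \<subseteq> kepler_set v a"
  proof
    fix z
    assume z: "z \<in> Qp v - coset v centre (1 + v lam2)"
    then have "\<not> close v (1 + v lam2) (z - centre)"
      using Qp_diff[OF _ centre_in_Qp] by (auto simp: coset_iff)
    then have "z \<noteq> centre" and "v (z - centre) \<le> v C - k"
      using v_C_order_1 v_lam by (auto simp: close_def)
    then show "z \<in> kepler_set v a"
      using pole_class_fills_complement[OF close_y_order_1[of 0]] z by (simp add: kepler_set_eq)
  qed
qed

end

context
  fixes s :: nat
  assumes l_ge_2: "2 \<le> l" and s_lt_l: "s < l" and pole: "close v k (y s)"
begin

lemma v_C_pole: "v C = v lam1" and v_lam_diff_pole: "v (lam2 - lam1) = v lam1"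
proof -
  have "u - 1 \<noteq> 0" and "\<not> close v 1 (u - 1)"
    using u_power_ne_1[of 1] not_close_u_power[of 1] l_ge_2 by auto
  moreover have "close v 0 (u - 1)"
    using v_u by (intro close_diff) (auto simp: close_def)
  ultimately have "v (u - 1) = 0"
    by (simp add: close_def)
  then show "v C = v lam1" and "v (lam2 - lam1) = v lam1"
    using v_C v_lam_diff pole_class_v_x[OF pole] v_minus_commute[of lam2 lam1] by simp_all
qed

lemma y_off_pole:
  assumes "i < l" and "i \<noteq> s"
  shows "y i \<noteq> 0 \<and> v (y i) = 0"
proof -
  have "u ^ i - u ^ s \<noteq> 0" and v_diff: "v (u ^ i - u ^ s) = 0"
    using v_u_power_diff[OF assms(1) s_lt_l assms(2)] by auto
  moreover have "close v (v (u ^ i - u ^ s) + 1) (y s)"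
    using close_mono[OF pole] v_diff k_pos by simp
  ultimately show ?thesis
    using v_add_dominant[of "u ^ i - u ^ s" "y s"] by (simp add: y_def add.commute)
qed

lemma coset_off_pole:
  assumes "i < l" and "i \<noteq> s"
  shows "coset v (ratio i) (v (lam2 - lam1) + k) = coset v (ratio i) (v C + k - 2 * v (y i))"
  using y_off_pole[OF assms] v_C_pole v_lam_diff_pole by simp

lemma close_ratio_off_pole:
  assumes "i < l" and "i \<noteq> s"
  shows "close v (v lam1) (ratio i)"
proof -
  have "close v (v lam1) lam2" and "close v (v lam1) (C / y i)"
    using y_off_pole[OF assms] C_ne_0 v_C_pole v_lam by (simp_all add: close_def v_divide)
  from close_add[OF this] show ?thesis
    using ratio_eq' y_off_pole[OF assms] by simp
qed

lemma ratio_on_pole_large: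
  assumes "y n \<noteq> 0" and "n mod l = s"
  shows "\<not> close v (v lam2 + 1 - k) (ratio n)"
proof -
  have "close v k (y (s + l * (n div l)))"
    using close_add[OF pole close_y_shift[of s "n div l"]] by simp
  moreover have "s + l * (n div l) = n"
    using assms(2) mod_mult_div_eq[of n l] by simp
  ultimately have "close v k (y n)"
    by simp
  then have "C / y n \<noteq> 0" and v_pole: "v (C / y n) \<le> v lam1 - k"
    using C_ne_0 assms(1) v_C_pole by (auto simp: close_def v_divide)
  moreover have "close v (v (C / y n) + 1) lam2"
    using v_pole v_lam k_pos by (simp add: close_def)
  ultimately have "ratio n \<noteq> 0" and "v (ratio n) = v (C / y n)"
    using v_add_dominant[of "C / y n" lam2] ratio_eq'[OF assms(1)] by (simp_all add: add.commute)
  then show ?thesis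
    using v_pole v_lam by (simp add: close_def)
qed

lemma ratios_subset_pole_order_ge_2:
  "ratios \<subseteq> (\<Union>i\<in>{..<l} - {s}. coset v (ratio i) (v (lam2 - lam1) + k))
      \<union> (Qp v - pZp v (v lam2 + 1 - k))"
proof
  fix r
  assume "r \<in> ratios"
  then obtain n where r: "r = ratio n" and "y n \<noteq> 0"
    by (auto simp: ratios_eq)
  show "r \<in> (\<Union>i\<in>{..<l} - {s}. coset v (ratio i) (v (lam2 - lam1) + k))
      \<union> (Qp v - pZp v (v lam2 + 1 - k))"
  proof (cases "n mod l = s")
    case False
    have "n mod l < l"
      using l_pos by simp
    then have "r \<in> coset v (ratio (n mod l)) (v (lam2 - lam1) + k)"
      using regular_class(1)[of "n mod l" "n div l"] y_off_pole[of "n mod l"] coset_off_pole False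
        k_pos r
      by simp
    then show ?thesis
      using False \<open>n mod l < l\<close> by blast
  next
    case True
    then show ?thesis
      using ratio_on_pole_large[OF \<open>y n \<noteq> 0\<close>] r ratio_in_Qp by (simp add: pZp_def)
  qed
qed

lemma outside_ball_subset_kepler_set: "Qp v - pZp v (v lam2 + 1 - k) \<subseteq> kepler_set v a"
proof
  fix z
  assume z: "z \<in> Qp v - pZp v (v lam2 + 1 - k)"
  then have "z \<noteq> 0" and v_z: "v z \<le> v lam1 - k"
    using v_lam by (auto simp: pZp_def close_def)
  have "close v (v z + 1) (- centre)"
    using close_mono[OF close_centre] v_z k_pos by simp
  from v_add_dominant[OF \<open>z \<noteq> 0\<close> this] have "z \<noteq> centre" and "v (z - centre) \<le> v C - k"
    using v_z v_C_pole by auto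
  then show "z \<in> kepler_set v a"
    using pole_class_fills_complement[OF pole] z by (simp add: kepler_set_eq)
qed

theorem kepler_set_pole_order_ge_2:
  "kepler_set v a = (\<Union>i\<in>{..<l} - {s}. coset v (ratio i) (v (lam2 - lam1) + k))
      \<union> (Qp v - pZp v (v lam2 + 1 - k))"
proof
  show "kepler_set v a \<subseteq> (\<Union>i\<in>{..<l} - {s}. coset v (ratio i) (v (lam2 - lam1) + k))
      \<union> (Qp v - pZp v (v lam2 + 1 - k))"
    unfolding kepler_set_eq
  proof (rule vclosure_subset[OF ratios_subset_pole_order_ge_2,
        where m = "max (v lam1 + k) (v lam2 + 1 - k)"])
    fix z r
    assume "z \<in> Qp v" and r: "r \<in> (\<Union>i\<in>{..<l} - {s}. coset v (ratio i) (v (lam2 - lam1) + k))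
      \<union> (Qp v - pZp v (v lam2 + 1 - k))"
      and close_z: "close v (max (v lam1 + k) (v lam2 + 1 - k)) (z - r)"
    then consider "r \<in> Qp v - coset v 0 (v lam2 + 1 - k)"
      | i where "i \<in> {..<l} - {s}" and "r \<in> coset v (ratio i) (v (lam2 - lam1) + k)"
      by (auto simp: pZp_eq_coset_0)
    then show "z \<in> (\<Union>i\<in>{..<l} - {s}. coset v (ratio i) (v (lam2 - lam1) + k))
      \<union> (Qp v - pZp v (v lam2 + 1 - k))"
    proof cases
      case 1
      then show ?thesis
        using coset_complement_absorb[OF zero_in_Qp \<open>z \<in> Qp v\<close>] close_mono[OF close_z]
        by (simp add: pZp_eq_coset_0)
    next
      case (2 i)
      then have "z \<in> coset v (ratio i) (v (lam2 - lam1) + k)"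
        using coset_absorb[OF ratio_in_Qp \<open>z \<in> Qp v\<close>] close_mono[OF close_z] v_lam_diff_pole
        by simp
      then show ?thesis
        using 2 by blast
    qed
  qed
  show "(\<Union>i\<in>{..<l} - {s}. coset v (ratio i) (v (lam2 - lam1) + k))
      \<union> (Qp v - pZp v (v lam2 + 1 - k)) \<subseteq> kepler_set v a"
  proof (intro Un_least UN_least)
    fix i
    assume "i \<in> {..<l} - {s}"
    then show "coset v (ratio i) (v (lam2 - lam1) + k) \<subseteq> kepler_set v a"
      using regular_class(2)[of i] y_off_pole[of i] coset_off_pole[of i] k_pos
        coset_subset_Qp[OF ratio_in_Qp, of i]
      by (auto simp: kepler_set_eq)
  qed (rule outside_ball_subset_kepler_set)
qed

lemma cosets_off_pole_disjoint:
  assumes "i \<in> {..<l} - {s}" and "j \<in> {..<l} - {s}" and "i \<noteq> j"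
  shows "coset v (ratio i) (v (lam2 - lam1) + k) \<inter> coset v (ratio j) (v (lam2 - lam1) + k) = {}"
  using v_ratio_diff[of i j] y_off_pole[of i] y_off_pole[of j] assms v_C_pole v_lam_diff_pole
    k_pos
  by (intro coset_disjoint) auto

lemma coset_off_pole_disjoint_outside_ball:
  assumes "i \<in> {..<l} - {s}"
  shows "coset v (ratio i) (v (lam2 - lam1) + k) \<inter> (Qp v - pZp v (v lam2 + 1 - k)) = {}"
proof -
  have "close v (v lam2 + 1 - k) z" if "z \<in> coset v (ratio i) (v (lam2 - lam1) + k)" for z
  proof -
    have "close v (v lam1) (z - ratio i)"
      using that v_lam_diff_pole k_pos by (auto simp: coset_iff intro: close_mono)
    from close_add[OF this close_ratio_off_pole[of i]] show ?thesis
      using assms v_lam k_pos by (auto intro: close_mono)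
  qed
  then have "coset v (ratio i) (v (lam2 - lam1) + k) \<subseteq> pZp v (v lam2 + 1 - k)"
    using coset_subset_Qp[OF ratio_in_Qp, of i] by (auto simp: pZp_def)
  then show ?thesis
    by auto
qed

end

end

theorem theorem2:
  fixes p :: nat and v :: "'a::field_char_0 \<Rightarrow> int"
    and a :: "nat \<Rightarrow> 'a" and r t c1 c2 lam1 lam2 :: 'a
  assumes "prime p" and "p \<ge> 3"
    and "Qp_or_unramified_quadratic p v"
    and "\<forall>n. a n \<in> Qp v"
    and "r \<in> Qp v" and "t \<in> Qp v"
    and "\<forall>n\<ge>2. a n = r * a (n - 1) + t * a (n - 2)"
    and "\<forall>n. a n = c1 * lam1 ^ n + c2 * lam2 ^ n"
    and "c1 \<noteq> 0" and "c2 \<noteq> 0" and "lam1 \<noteq> 0" and "lam2 \<noteq> 0"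
    and "v lam1 = v lam2"
    and "\<not> (\<exists>n>0. (lam2 / lam1) ^ n = 1)"
  shows
    "let u = lam2 / lam1; l = ord_mod_p v u; k = v (u ^ l - 1);
         \<Lambda> = vclosure v (range (\<lambda>n. u ^ n)); K = kepler_set v a
     in
     (- c1 / c2 \<notin> \<Lambda> \<longrightarrow>
        (let B = (\<lambda>i. coset v (a (Suc i) / a i)
                    (v (c1 / c2) + v (lam2 - lam1) - 2 * v (c1 / c2 + u ^ i) + k))
         in K = (\<Union>i<l. B i) \<and> (\<forall>i<l. \<forall>j<l. i \<noteq> j \<longrightarrow> B i \<inter> B j = {}))) \<and>
     (- c1 / c2 \<in> \<Lambda> \<and> l = 1 \<longrightarrow>
        K = Qp v - coset v ((lam1 + lam2) / 2) (1 + v lam2)) \<and>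
     (\<forall>s<l. - c1 / c2 \<in> \<Lambda> \<and> 2 \<le> l \<and> cong_pm v k (u ^ s) (- c1 / c2) \<longrightarrow>
        (let B = (\<lambda>i. coset v (a (Suc i) / a i) (v (lam2 - lam1) + k));
             C = Qp v - pZp v (v lam2 + 1 - k)
         in K = (\<Union>i\<in>{..<l} - {s}. B i) \<union> C \<and>
            (\<forall>i\<in>{..<l} - {s}. \<forall>j\<in>{..<l} - {s}. i \<noteq> j \<longrightarrow> B i \<inter> B j = {}) \<and>
            (\<forall>i\<in>{..<l} - {s}. B i \<inter> C = {})))"
proof -
  interpret kepler_setting p v a c1 c2 lam1 lam2
    using assms by unfold_locales (auto simp: Qp_or_unramified_quadratic_def)
  have exponent: "v (c1 / c2) + v (lam2 - lam1) - 2 * v (c1 / c2 + u ^ i) + k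
      = v C + k - 2 * v (y i)" for i
    using v_C v_minus_commute[of lam2 lam1] by (simp add: x_def y_def)
  have pole: "cong_pm v k (u ^ s) (- c1 / c2) \<longleftrightarrow> close v k (y s)" for s
    by (simp add: cong_pm_def y_def x_def add.commute)
  have "- c1 / c2 = - x"
    by (simp add: x_def)
  then show ?thesis
    unfolding Let_def u_def[symmetric] l_def[symmetric] w_def[symmetric] k_def[symmetric]
      ratio_def[symmetric] centre_def[symmetric] exponent pole
    using kepler_set_without_pole regular_cosets_disjoint kepler_set_pole_order_1
      kepler_set_pole_order_ge_2 cosets_off_pole_disjoint coset_off_pole_disjoint_outside_ball
    by (simp add: w_def)
qed

end
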